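(* Let $(\mathcal{U},f,g,\preccurlyeq)$ be a fault-tolerance partially ordered $(m,n)$-semiring as described in the context, and let $x_1,\ldots,x_m,y_1,\ldots,y_m,z_1,\ldots,z_n,u_1,\ldots,u_n\in\mathcal{U}$ be disjoint components. (i) If $f(f(x_1^m),\ldots,f(x_1^m))\preccurlyeq f(y_1^m)$ (with $m$ copies of $f(x_1^m)$), then $f(x_1^m)\preccurlyeq f(y_1^m)$. (ii) If $g(z_1^n)\preccurlyeq g(g(u_1^n),\ldots,g(u_1^n))$ (with $n$ copies of $g(u_1^n)$), then $g(z_1^n)\preccurlyeq g(u_1^n)$.
   Context: Notation: $x_i^j$ denotes $x_i,\ldots,x_j$. $(\mathcal{U},f,g)$ is an $(m,n)$-semiring: $f$ is an associative $m$-ary and $g$ an associative $n$-ary operation on $\mathcal{U}$ (associativity of a $k$-ary $h$: $h(x_1^{i-1},h(x_i^{k+i-1}),x_{k+i}^{2k-1})=h(x_1^{j-1},h(x_j^{k+j-1}),x_{k+j}^{2k-1})$ for $1\le i\le j\le k$), and $g$ distributes over $f$ in every position. $\mathcal{U}$ is interpreted as a set of systems; $f(x_1^m)$ is the system that fails when any $x_i$ fails, $g(y_1^n)$ the system that fails only when all $y_j$ fail; elements are assumed to be disjoint components (failing independently), which imposes no further algebraic condition. $\mathbf{0}\in\mathcal{U}$ (the always-up system) is an $f$-identity ($f(\mathbf{0},\ldots,x,\ldots,\mathbf{0})=x$ in every position) and $\mathbf{1}$ (the always-down system) is a $g$-identity; moreover $g(y_1^{j-1},\mathbf{0},y_{j+1}^n)=\mathbf{0}$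 and $f(x_1^{i-1},\mathbf{1},x_{i+1}^m)=\mathbf{1}$ for all arguments and positions. $\preccurlyeq$ is a partial order on $\mathcal{U}$ ("fault-tolerance partial order") such that $(\mathcal{U},f,g,\preccurlyeq)$ is a partially ordered $(m,n)$-semiring: $a\preccurlyeq b$ implies $f(x_1^{i-1},a,x_{i+1}^m)\preccurlyeq f(x_1^{i-1},b,x_{i+1}^m)$ and $g(y_1^{j-1},a,y_{j+1}^n)\preccurlyeq g(y_1^{j-1},b,y_{j+1}^n)$ for all arguments and all positions; and $\mathbf{0}\preccurlyeq a\preccurlyeq\mathbf{1}$ for all $a\in\mathcal{U}$. *)

theory Defs
  imports Main
begin

text \<open>A k-ary operation on the type 'a is modelled as a function on lists,
  only ever applied to lists of length k. Positions are 0-based.\<close>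

definition assoc_op :: "nat \<Rightarrow> ('a list \<Rightarrow> 'a) \<Rightarrow> bool" where
  "assoc_op k h \<longleftrightarrow>
     (\<forall>xs i j. length xs = 2 * k - 1 \<and> i \<le> j \<and> j < k \<longrightarrow>
        h (take i xs @ [h (take k (drop i xs))] @ drop (i + k) xs) =
        h (take j xs @ [h (take k (drop j xs))] @ drop (j + k) xs))"

definition distrib_op :: "nat \<Rightarrow> nat \<Rightarrow> ('a list \<Rightarrow> 'a) \<Rightarrow> ('a list \<Rightarrow> 'a) \<Rightarrow> bool" where
  "distrib_op m n f g \<longleftrightarrow>
     (\<forall>ys xs j. length ys = n \<and> j < n \<and> length xs = m \<longrightarrow>
        g (ys[j := f xs]) = f (map (\<lambda>x. g (ys[j := x])) xs))"

definition mn_semiring :: "nat \<Rightarrow> nat \<Rightarrow> ('a list \<Rightarrow> 'a) \<Rightarrow> ('a list \<Rightarrow> 'a) \<Rightarrow> bool" where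
  "mn_semiring m n f g \<longleftrightarrow> 2 \<le> m \<and> 2 \<le> n \<and> assoc_op m f \<and> assoc_op n g \<and> distrib_op m n f g"

text \<open>Fault-tolerance partially ordered (m,n)-semiring with always-up system zero
  and always-down system one.\<close>
definition ft_po_mn_semiring ::
  "nat \<Rightarrow> nat \<Rightarrow> ('a list \<Rightarrow> 'a) \<Rightarrow> ('a list \<Rightarrow> 'a) \<Rightarrow> 'a \<Rightarrow> 'a \<Rightarrow> ('a \<Rightarrow> 'a \<Rightarrow> bool) \<Rightarrow> bool" where
  "ft_po_mn_semiring m n f g zero one le \<longleftrightarrow>
     mn_semiring m n f g \<and>
     \<comment> \<open>partial order\<close>
     (\<forall>a. le a a) \<and> (\<forall>a b. le a b \<and> le b a \<longrightarrow> a = b) \<and>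
     (\<forall>a b c. le a b \<and> le b c \<longrightarrow> le a c) \<and>
     \<comment> \<open>identities\<close>
     (\<forall>x i. i < m \<longrightarrow> f ((replicate m zero)[i := x]) = x) \<and>
     (\<forall>y j. j < n \<longrightarrow> g ((replicate n one)[j := y]) = y) \<and>
     \<comment> \<open>absorbing elements\<close>
     (\<forall>ys j. length ys = n \<and> j < n \<longrightarrow> g (ys[j := zero]) = zero) \<and>
     (\<forall>xs i. length xs = m \<and> i < m \<longrightarrow> f (xs[i := one]) = one) \<and>
     \<comment> \<open>monotonicity in every position\<close>
     (\<forall>a b xs i. le a b \<and> length xs = m \<and> i < m \<longrightarrow> le (f (xs[i := a])) (f (xs[i := b]))) \<and>
     (\<forall>a b ys j. le a b \<and> length ys = n \<and> j < n \<longrightarrow> le (g (ys[j := a])) (g (ys[j := b]))) \<and>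
     \<comment> \<open>bounds\<close>
     (\<forall>a. le zero a \<and> le a one)"

end

theory Submission
  imports Defs
begin

text \<open>Padding with the f-identity 0 (resp. the g-identity 1) gives
  f(x) = f(x,0,\<dots>,0) \<preceq> f(x,\<dots>,x) and g(u,\<dots>,u) \<preceq> g(u,1,\<dots>,1) = g(u), since
  0 \<preceq> x and u \<preceq> 1; transitivity then yields both parts.\<close>

lemma monotone_pointwise_list:
  assumes trans: "\<And>a b c. le a b \<Longrightarrow> le b c \<Longrightarrow> le a c"
    and refl: "\<And>a. le a a"
    and mono: "\<And>a b L i. le a b \<Longrightarrow> length L = N \<Longrightarrow> i < N \<Longrightarrow> le (F (L[i := a])) (F (L[i := b]))"
    and len: "length xs = N" "length ys = N"
    and pw: "\<And>i. i < N \<Longrightarrow> le (xs ! i) (ys ! i)"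
  shows "le (F xs) (F ys)"
proof -
  define M where "M k = map (\<lambda>i. if i < k then ys ! i else xs ! i) [0..<N]" for k
  have "le (F xs) (F (M k))" if "k \<le> N" for k
    using that
  proof (induction k)
    case 0
    have "M 0 = xs" unfolding M_def using len by (simp add: list_eq_iff_nth_eq)
    then show ?case using refl by simp
  next
    case (Suc k)
    have "(M k)[k := xs ! k] = M k" and "(M k)[k := ys ! k] = M (Suc k)"
      unfolding M_def using Suc.prems by (auto simp add: list_eq_iff_nth_eq nth_list_update)
    moreover have "length (M k) = N" unfolding M_def by simp
    ultimately have "le (F (M k)) (F (M (Suc k)))"
      using mono[OF pw[of k], of "M k" k] Suc.prems by simp
    with Suc show ?case using trans by auto
  qed
  moreover have "M N = ys" unfolding M_def using len by (simp add: list_eq_iff_nth_eq)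
  ultimately show ?thesis by force
qed

context
  fixes m n f g zero one le
  assumes S: "ft_po_mn_semiring m n f g zero one le"
begin

lemma ft_le_refl: "le a a"
  and ft_le_trans: "le a b \<Longrightarrow> le b c \<Longrightarrow> le a c"
  and ft_zero_le: "le zero a"
  and ft_le_one: "le a one"
  using S unfolding ft_po_mn_semiring_def by (meson, meson, meson, meson)

lemma ft_arity_pos: "0 < m" "0 < n"
  using S unfolding ft_po_mn_semiring_def mn_semiring_def by simp_all

lemma ft_f_zero_ident: "i < m \<Longrightarrow> f ((replicate m zero)[i := x]) = x"
  and ft_g_one_ident: "j < n \<Longrightarrow> g ((replicate n one)[j := y]) = y"
  using S unfolding ft_po_mn_semiring_def by (meson, meson)

lemma ft_f_mono: "le a b \<Longrightarrow> length L = m \<Longrightarrow> i < m \<Longrightarrow> le (f (L[i := a])) (f (L[i := b]))"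
  and ft_g_mono: "le a b \<Longrightarrow> length L = n \<Longrightarrow> j < n \<Longrightarrow> le (g (L[j := a])) (g (L[j := b]))"
  using S unfolding ft_po_mn_semiring_def by blast+

lemma ft_le_f_replicate: "le x (f (replicate m x))"
proof -
  have "le (f ((replicate m zero)[0 := x])) (f (replicate m x))"
    by (rule monotone_pointwise_list[where le = le and F = f and N = m, OF ft_le_trans ft_le_refl ft_f_mono])
      (auto simp: nth_list_update ft_le_refl ft_zero_le)
  then show ?thesis using ft_f_zero_ident[OF ft_arity_pos(1)] by simp
qed

lemma ft_g_replicate_le: "le (g (replicate n u)) u"
proof -
  have "le (g (replicate n u)) (g ((replicate n one)[0 := u]))"
    by (rule monotone_pointwise_list[where le = le and F = g and N = n, OF ft_le_trans ft_le_refl ft_g_mono])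
      (auto simp: nth_list_update ft_le_refl ft_le_one)
  then show ?thesis using ft_g_one_ident[OF ft_arity_pos(2)] by simp
qed

end

theorem corollary3:
  fixes f g :: "'a list \<Rightarrow> 'a" and zero one :: 'a and le :: "'a \<Rightarrow> 'a \<Rightarrow> bool"
    and xs ys zs us :: "'a list" and m n :: nat
  assumes "ft_po_mn_semiring m n f g zero one le"
    and "length xs = m" and "length ys = m" and "length zs = n" and "length us = n"
  shows "(le (f (replicate m (f xs))) (f ys) \<longrightarrow> le (f xs) (f ys)) \<and>
         (le (g zs) (g (replicate n (g us))) \<longrightarrow> le (g zs) (g us))"
  using ft_le_trans[OF assms(1)] ft_le_f_replicate[OF assms(1), of "f xs"]
    ft_g_replicate_le[OF assms(1), of "g us"]
  by blast

end
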